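(* Let $G$ be a discrete abelian group (written additively), $\alpha\in\mathcal C_c(G,\mathbf k)$, and consider the convolution equation $\sigma(s)=\alpha\star s$, i.e. $s_g^{(t+1)}=\sum_{h\in G}\alpha_h^{(t)}s_{g-h}^{(t)}$. Let $L^{\rm per}$ be the smallest $\sigma$-subring of ${\rm Seq}(\mathbf C)$ containing $\mathbf k$ and all values $s_g^{(t)}$ of solutions $s$ that are $H$-periodic for some subgroup $H$ of finite index in $G$. Then $$L^{\rm per}=\mathbf k\Big[\prod_{\tau=0}^{t-1}\hat\alpha_\theta^{(\tau)} : \theta\in{\rm Tor}(\widehat G)\Big],$$ where for $\theta\in\widehat G$, $\hat\alpha_\theta^{(\tau)}=\sum_{g\in G}\alpha^{(\tau)}_g\theta(g)$ and $\prod_{\tau=0}^{t-1}\hat\alpha^{(\tau)}_\theta$ denotes the sequence indexed by $t$.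
   Context: ${\rm Seq}(\mathbf C)$ is the ring of complex sequences indexed by $t\in\mathbf Z_{\ge0}$ with shift $\sigma(x)^{(t)}=x^{(t+1)}$; $\mathbf k\subseteq{\rm Seq}(\mathbf C)$ is a $\sigma$-stable subring with constants $\mathbf C$; $\mathcal C_c(G,\mathbf k)$ is the set of finitely supported functions $G\to\mathbf k$. A function $s:G\to{\rm Seq}(\mathbf C)$ is $H$-periodic if $s_{g}=s_{g+h}$ for all $g\in G$, $h\in H$. $\widehat G$ is the group of homomorphisms $G\to\mathbf S^1\subset\mathbf C^*$ and ${\rm Tor}(\widehat G)$ its subgroup of finite-order elements. *)

theory Defs
  imports Complex_Main
begin

type_synonym cseq = "nat \<Rightarrow> complex"

definition shift :: "cseq \<Rightarrow> cseq" where
  "shift x = (\<lambda>t. x (Suc t))"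

definition is_subring :: "cseq set \<Rightarrow> bool" where
  "is_subring S \<longleftrightarrow> (\<lambda>_. 0) \<in> S \<and> (\<lambda>_. 1) \<in> S \<and>
     (\<forall>x\<in>S. \<forall>y\<in>S. (\<lambda>t. x t + y t) \<in> S \<and> (\<lambda>t. x t * y t) \<in> S) \<and>
     (\<forall>x\<in>S. (\<lambda>t. - x t) \<in> S)"

definition sigma_stable :: "cseq set \<Rightarrow> bool" where
  "sigma_stable S \<longleftrightarrow> (\<forall>x\<in>S. shift x \<in> S)"

definition base_ring :: "cseq set \<Rightarrow> bool" where
  "base_ring k \<longleftrightarrow> is_subring k \<and> sigma_stable k \<and> (\<forall>c. (\<lambda>_. c) \<in> k)"

text \<open>Subring generated by a set (e.g. k[X] = ring_gen (k \<union> X)).\<close>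
definition ring_gen :: "cseq set \<Rightarrow> cseq set" where
  "ring_gen X = \<Inter>{R. is_subring R \<and> X \<subseteq> R}"

definition sigma_ring_gen :: "cseq set \<Rightarrow> cseq set" where
  "sigma_ring_gen X = \<Inter>{R. is_subring R \<and> sigma_stable R \<and> X \<subseteq> R}"

definition supp :: "('g \<Rightarrow> cseq) \<Rightarrow> 'g set" where
  "supp \<alpha> = {g. \<alpha> g \<noteq> (\<lambda>_. 0)}"

definition Cc :: "cseq set \<Rightarrow> ('g \<Rightarrow> cseq) set" where
  "Cc k = {\<alpha>. finite (supp \<alpha>) \<and> (\<forall>g. \<alpha> g \<in> k)}"

definition is_solution :: "('g::ab_group_add \<Rightarrow> cseq) \<Rightarrow> ('g \<Rightarrow> cseq) \<Rightarrow> bool" where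
  "is_solution \<alpha> s \<longleftrightarrow>
     (\<forall>g t. s g (Suc t) = (\<Sum>h\<in>supp \<alpha>. \<alpha> h t * s (g - h) t))"

definition is_subgroup :: "'g::ab_group_add set \<Rightarrow> bool" where
  "is_subgroup H \<longleftrightarrow> 0 \<in> H \<and> (\<forall>x\<in>H. \<forall>y\<in>H. x + y \<in> H) \<and> (\<forall>x\<in>H. - x \<in> H)"

definition finite_index :: "'g::ab_group_add set \<Rightarrow> bool" where
  "finite_index H \<longleftrightarrow> finite {(\<lambda>h. g + h) ` H | g. True}"

definition periodic :: "'g::ab_group_add set \<Rightarrow> ('g \<Rightarrow> cseq) \<Rightarrow> bool" where
  "periodic H s \<longleftrightarrow> (\<forall>g. \<forall>h\<in>H. s (g + h) = s g)"

definition character :: "('g::ab_group_add \<Rightarrow> complex) \<Rightarrow> bool" where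
  "character \<theta> \<longleftrightarrow> (\<forall>g h. \<theta> (g + h) = \<theta> g * \<theta> h) \<and> (\<forall>g. cmod (\<theta> g) = 1)"

definition torsion_character :: "('g::ab_group_add \<Rightarrow> complex) \<Rightarrow> bool" where
  "torsion_character \<theta> \<longleftrightarrow> character \<theta> \<and> (\<exists>n::nat. n > 0 \<and> (\<forall>g. \<theta> g ^ n = 1))"

definition alpha_hat :: "('g \<Rightarrow> cseq) \<Rightarrow> ('g \<Rightarrow> complex) \<Rightarrow> cseq" where
  "alpha_hat \<alpha> \<theta> = (\<lambda>\<tau>. \<Sum>g\<in>supp \<alpha>. \<alpha> g \<tau> * \<theta> g)"

definition L_per :: "cseq set \<Rightarrow> ('g::ab_group_add \<Rightarrow> cseq) \<Rightarrow> cseq set" where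
  "L_per k \<alpha> = sigma_ring_gen (k \<union>
     {s g | s g. is_solution \<alpha> s \<and> (\<exists>H. is_subgroup H \<and> finite_index H \<and> periodic H s)})"

end

theory Submission
  imports Defs
begin

text \<open>
  For a torsion character \<open>\<theta>\<close>, the family \<open>s g = \<theta> (- g) * hat_prod \<alpha> \<theta>\<close> solves
  \<open>\<sigma>(s) = \<alpha> \<star> s\<close>, is periodic modulo the kernel of \<open>\<theta>\<close> (which has finite index since \<open>\<theta>\<close>
  takes values in the \<open>n\<close>-th roots of unity) and has \<open>s\<^sub>0\<close> equal to the product; this gives one
  inclusion. Conversely the ring generated by \<open>k\<close> and the products is \<open>\<sigma>\<close>-stable, because
  shifting a product multiplies it by \<open>alpha_hat \<alpha> \<theta> \<in> k\<close>. A solution is determined by its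
  initial values, and if it is \<open>H\<close>-periodic these form a function on the finite group \<open>G/H\<close>,
  hence a linear combination of torsion characters; by linearity the solution is the
  corresponding combination of the solutions above.

  The Fourier expansion on \<open>G/H\<close> is built by adjoining coset representatives to \<open>H\<close> one at
  a time. If \<open>g\<close> has order \<open>n\<close> modulo \<open>B\<close>, a \<open>B\<close>-periodic function splits into \<open>n\<close> components
  on which translation by \<open>g\<close> acts by \<open>\<omega>\<^sup>l\<close> (\<open>\<omega>\<close> a primitive \<open>n\<close>-th root of unity), and dividing
  the \<open>l\<close>-th component by \<open>\<psi>\<^sup>l\<close>, where \<open>\<psi>\<close> is a torsion character trivial on \<open>B\<close> with
  \<open>\<psi>(g) = \<omega>\<close>, makes it periodic modulo \<open>B + \<nat>g\<close>. Such \<open>\<psi>\<close> exist because characters of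
  finite order extend from \<open>B\<close> to \<open>B + \<nat>g\<close>, by choosing an \<open>n\<close>-th root of the value at \<open>ng\<close>,
  and hence, adjoining the remaining representatives, to all of \<open>G\<close>.
\<close>

lemma is_subring_Inter: "(\<And>R. R \<in> S \<Longrightarrow> is_subring R) \<Longrightarrow> is_subring (\<Inter>S)"
  unfolding is_subring_def by auto

lemma is_subring_ring_gen: "is_subring (ring_gen X)"
  unfolding ring_gen_def by (rule is_subring_Inter) auto

lemma ring_gen_superset: "X \<subseteq> ring_gen X"
  unfolding ring_gen_def by auto

lemma ring_gen_least: "is_subring R \<Longrightarrow> X \<subseteq> R \<Longrightarrow> ring_gen X \<subseteq> R"
  unfolding ring_gen_def by auto

lemma is_subring_sigma_ring_gen: "is_subring (sigma_ring_gen X)"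
  unfolding sigma_ring_gen_def by (rule is_subring_Inter) auto

lemma sigma_ring_gen_superset: "X \<subseteq> sigma_ring_gen X"
  unfolding sigma_ring_gen_def by auto

lemma sigma_ring_gen_least:
  "is_subring R \<Longrightarrow> sigma_stable R \<Longrightarrow> X \<subseteq> R \<Longrightarrow> sigma_ring_gen X \<subseteq> R"
  unfolding sigma_ring_gen_def by auto

lemma subring_add: "is_subring R \<Longrightarrow> x \<in> R \<Longrightarrow> y \<in> R \<Longrightarrow> (\<lambda>t. x t + y t) \<in> R"
  unfolding is_subring_def by auto

lemma subring_mult: "is_subring R \<Longrightarrow> x \<in> R \<Longrightarrow> y \<in> R \<Longrightarrow> (\<lambda>t. x t * y t) \<in> R"
  unfolding is_subring_def by auto

lemma subring_zero: "is_subring R \<Longrightarrow> (\<lambda>_. 0) \<in> R"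
  unfolding is_subring_def by auto

lemma subring_sum:
  assumes "is_subring R" "finite A" "\<And>a. a \<in> A \<Longrightarrow> f a \<in> R"
  shows "(\<lambda>t. \<Sum>a\<in>A. f a t) \<in> R"
  using assms(2,3)
proof (induction A rule: finite_induct)
  case empty
  then show ?case using subring_zero[OF assms(1)] by simp
next
  case (insert a A)
  have "(\<lambda>t. f a t + (\<lambda>t. \<Sum>a\<in>A. f a t) t) \<in> R"
    by (rule subring_add[OF assms(1)]) (use insert in auto)
  then show ?case using insert by simp
qed

lemma base_ring_const: "base_ring k \<Longrightarrow> k \<subseteq> R \<Longrightarrow> (\<lambda>_. c) \<in> R"
  unfolding base_ring_def by auto

lemma sigma_stable_ring_gen:
  assumes "\<And>x. x \<in> X \<Longrightarrow> shift x \<in> ring_gen X"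
  shows "sigma_stable (ring_gen X)"
proof -
  let ?R = "ring_gen X"
  have "is_subring {x \<in> ?R. shift x \<in> ?R}"
    using is_subring_ring_gen[of X] unfolding is_subring_def shift_def by simp
  moreover have "X \<subseteq> {x \<in> ?R. shift x \<in> ?R}"
    using assms ring_gen_superset by blast
  ultimately have "?R \<subseteq> {x \<in> ?R. shift x \<in> ?R}"
    by (rule ring_gen_least)
  then show ?thesis unfolding sigma_stable_def by blast
qed

section \<open>Characters\<close>

lemma character_add: "character \<theta> \<Longrightarrow> \<theta> (a + b) = \<theta> a * \<theta> b"
  unfolding character_def by auto

lemma character_norm: "character \<theta> \<Longrightarrow> cmod (\<theta> a) = 1"
  unfolding character_def by auto

lemma character_zero: "character \<theta> \<Longrightarrow> \<theta> 0 = 1"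
  by (metis add_0 character_add character_norm mult_cancel_left1 norm_zero zero_neq_one)

lemma character_uminus: "character \<theta> \<Longrightarrow> \<theta> (- a) * \<theta> a = 1"
  by (metis character_zero character_add add.left_inverse)

lemma cnj_mult_self_norm_1: "cmod z = 1 \<Longrightarrow> cnj z * z = 1"
  by (metis complex_norm_square mult.commute of_real_1 power_one)

lemma torsion_character_character: "torsion_character \<chi> \<Longrightarrow> character \<chi>"
  unfolding torsion_character_def by auto

lemma torsion_character_one: "torsion_character (\<lambda>_. 1)"
  unfolding torsion_character_def character_def by auto

lemma torsion_character_mult:
  assumes "torsion_character \<chi>" "torsion_character \<psi>"
  shows "torsion_character (\<lambda>x. \<chi> x * \<psi> x)"
proof -
  obtain n where n: "n > 0" "\<forall>g. \<chi> g ^ n = 1"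
    using assms(1) unfolding torsion_character_def by blast
  obtain m where m: "m > 0" "\<forall>g. \<psi> g ^ m = 1"
    using assms(2) unfolding torsion_character_def by blast
  have "(\<chi> g * \<psi> g) ^ (n * m) = 1" for g
    using n m by (simp add: power_mult_distrib power_mult) (metis power_mult mult.commute power_one)
  moreover have "character (\<lambda>x. \<chi> x * \<psi> x)"
    using assms unfolding torsion_character_def character_def by (auto simp: norm_mult)
  ultimately show ?thesis
    unfolding torsion_character_def using n m by (intro conjI exI[of _ "n * m"]) auto
qed

lemma torsion_character_power: "torsion_character \<psi> \<Longrightarrow> torsion_character (\<lambda>x. \<psi> x ^ l)"
  by (induction l) (simp_all add: torsion_character_one torsion_character_mult)

lemma torsion_character_uminus: "torsion_character \<chi> \<Longrightarrow> torsion_character (\<lambda>y. \<chi> (- y))"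
  unfolding torsion_character_def character_def by (metis minus_add_distrib add.commute)

lemma is_subgroup_character_kernel:
  "character \<theta> \<Longrightarrow> is_subgroup {g. \<theta> g = 1}"
  unfolding is_subgroup_def
  by (auto simp: character_zero character_add) (metis character_uminus mult_1_right)

lemma finite_index_character_kernel:
  assumes "torsion_character \<theta>"
  shows "finite_index {g. \<theta> g = 1}"
proof -
  have \<theta>: "character \<theta>" using assms by (rule torsion_character_character)
  obtain n where n: "n > 0" "\<forall>g. \<theta> g ^ n = 1"
    using assms unfolding torsion_character_def by blast
  have "(\<lambda>h. g + h) ` {g. \<theta> g = 1} = {x. \<theta> x = \<theta> g}" for g
  proof (intro equalityI subsetI)
    fix x assume "x \<in> {x. \<theta> x = \<theta> g}"
    then have "\<theta> (x - g) = 1"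
      using character_add[OF \<theta>, of x "- g"] character_uminus[OF \<theta>, of g] by (simp add: mult.commute)
    then show "x \<in> (\<lambda>h. g + h) ` {g. \<theta> g = 1}"
      by (intro rev_image_eqI[of "x - g"]) auto
  qed (auto simp: character_add[OF \<theta>])
  then have "{(\<lambda>h. g + h) ` {g. \<theta> g = 1} | g. True} \<subseteq> (\<lambda>z. {x. \<theta> x = z}) ` {z. z ^ n = 1}"
    using n(2) by auto
  moreover have "finite {z::complex. z ^ n = 1}"
    using n(1) by (intro finite_roots_unity) auto
  ultimately show ?thesis
    unfolding finite_index_def by (meson finite_imageI finite_subset)
qed

section \<open>Adjoining elements to a subgroup of finite index\<close>

fun nsmul :: "nat \<Rightarrow> 'g::ab_group_add \<Rightarrow> 'g" where
  "nsmul 0 g = 0"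
| "nsmul (Suc m) g = g + nsmul m g"

lemma nsmul_add: "nsmul (m + m') g = nsmul m g + nsmul m' g"
  by (induction m) (auto simp: add.assoc)

lemma nsmul_mult: "nsmul (m * m') g = nsmul m (nsmul m' g)"
  by (induction m) (auto simp: nsmul_add)

lemma subgroup_zero: "is_subgroup B \<Longrightarrow> 0 \<in> B"
  unfolding is_subgroup_def by auto

lemma subgroup_add: "is_subgroup B \<Longrightarrow> x \<in> B \<Longrightarrow> y \<in> B \<Longrightarrow> x + y \<in> B"
  unfolding is_subgroup_def by auto

lemma subgroup_uminus: "is_subgroup B \<Longrightarrow> x \<in> B \<Longrightarrow> - x \<in> B"
  unfolding is_subgroup_def by auto

lemma subgroup_diff: "is_subgroup B \<Longrightarrow> x \<in> B \<Longrightarrow> y \<in> B \<Longrightarrow> x - y \<in> B"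
  by (metis diff_conv_add_uminus subgroup_add subgroup_uminus)

lemma subgroup_nsmul: "is_subgroup B \<Longrightarrow> x \<in> B \<Longrightarrow> nsmul m x \<in> B"
  by (induction m) (auto intro: subgroup_add subgroup_zero)

definition torsion_mod :: "'g::ab_group_add set \<Rightarrow> bool" where
  "torsion_mod B \<longleftrightarrow> (\<forall>a. \<exists>n>0. nsmul n a \<in> B)"

definition order_mod :: "'g::ab_group_add set \<Rightarrow> 'g \<Rightarrow> nat" where
  "order_mod B a = (LEAST n. 0 < n \<and> nsmul n a \<in> B)"

lemma order_mod:
  assumes "torsion_mod B"
  shows "0 < order_mod B a" "nsmul (order_mod B a) a \<in> B"
proof -
  obtain n where "0 < n" "nsmul n a \<in> B"
    using assms unfolding torsion_mod_def by blast
  then have "0 < order_mod B a \<and> nsmul (order_mod B a) a \<in> B"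
    unfolding order_mod_def by (rule LeastI[of _ n, OF conjI])
  then show "0 < order_mod B a" "nsmul (order_mod B a) a \<in> B" by auto
qed

lemma order_mod_dvd:
  assumes B: "is_subgroup B" "torsion_mod B" and j: "nsmul j a \<in> B"
  shows "order_mod B a dvd j"
proof -
  let ?n = "order_mod B a"
  have "nsmul j a = nsmul (j mod ?n) a + nsmul (j div ?n) (nsmul ?n a)"
    by (metis mod_div_mult_eq nsmul_add nsmul_mult add.commute mult.commute)
  then have "nsmul (j mod ?n) a = nsmul j a - nsmul (j div ?n) (nsmul ?n a)"
    by (simp add: algebra_simps)
  also have "\<dots> \<in> B"
    by (rule subgroup_diff[OF B(1) j subgroup_nsmul[OF B(1) order_mod(2)[OF B(2)]]])
  finally have "nsmul (j mod ?n) a \<in> B" .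
  moreover have "j mod ?n < ?n"
    using order_mod(1)[OF B(2)] by simp
  ultimately have "j mod ?n = 0"
    using not_less_Least[of "j mod ?n" "\<lambda>n. 0 < n \<and> nsmul n a \<in> B"] unfolding order_mod_def by auto
  then show ?thesis by auto
qed

lemma torsion_mod_mono: "torsion_mod B \<Longrightarrow> B \<subseteq> B' \<Longrightarrow> torsion_mod B'"
  unfolding torsion_mod_def by blast

lemma torsion_mod_finite_index:
  assumes B: "is_subgroup B" and fi: "finite_index B"
  shows "torsion_mod B"
  unfolding torsion_mod_def
proof
  fix a :: 'a
  define c where "c m = (\<lambda>h. nsmul m a + h) ` B" for m
  have "range c \<subseteq> {(\<lambda>h. g + h) ` B | g. True}"
    unfolding c_def by blast
  then have "finite (range c)"
    using fi unfolding finite_index_def by (rule finite_subset)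
  then have "\<not> inj c"
    using finite_imageD infinite_UNIV_nat by blast
  then obtain p q where pq: "p < q" "c p = c q"
    unfolding inj_def by (metis linorder_neqE_nat)
  have "nsmul p a \<in> c q"
    using pq(2) subgroup_zero[OF B] unfolding c_def by force
  then obtain h where h: "h \<in> B" "nsmul p a = nsmul q a + h"
    unfolding c_def by auto
  have "nsmul q a = nsmul p a + nsmul (q - p) a"
    using nsmul_add[of p "q - p" a] pq(1) by simp
  then have "nsmul (q - p) a = - h"
    using h(2) by (simp add: algebra_simps eq_neg_iff_add_eq_0)
  then show "\<exists>n>0. nsmul n a \<in> B"
    using pq(1) subgroup_uminus[OF B h(1)] by (intro exI[of _ "q - p"]) auto
qed

definition adjoin :: "'g::ab_group_add set \<Rightarrow> 'g \<Rightarrow> 'g set" where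
  "adjoin B a = {b + nsmul m a | b m. b \<in> B}"

lemma adjoin_superset: "is_subgroup B \<Longrightarrow> B \<subseteq> adjoin B a"
  unfolding adjoin_def by (force intro: exI[of _ 0])

lemma adjoin_generator: "is_subgroup B \<Longrightarrow> a \<in> adjoin B a"
  unfolding adjoin_def by (force intro: exI[of _ 0] exI[of _ 1] subgroup_zero)

lemma is_subgroup_adjoin:
  assumes B: "is_subgroup B" "torsion_mod B"
  shows "is_subgroup (adjoin B a)"
proof -
  let ?n = "order_mod B a"
  have add: "x + y \<in> adjoin B a" if xy: "x \<in> adjoin B a" "y \<in> adjoin B a" for x y
  proof -
    obtain b m where "b \<in> B" "x = b + nsmul m a"
      using xy(1) unfolding adjoin_def by auto
    moreover obtain b' m' where "b' \<in> B" "y = b' + nsmul m' a"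
      using xy(2) unfolding adjoin_def by auto
    ultimately have "b + b' \<in> B" "x + y = (b + b') + nsmul (m + m') a"
      by (auto simp: nsmul_add algebra_simps intro: subgroup_add[OF B(1)])
    then show ?thesis unfolding adjoin_def by blast
  qed
  have uminus: "- x \<in> adjoin B a" if x: "x \<in> adjoin B a" for x
  proof -
    obtain b m where bm: "b \<in> B" "x = b + nsmul m a"
      using x unfolding adjoin_def by auto
    text \<open>\<open>- m a = (?n - 1) m a - ?n m a\<close>, and \<open>?n m a \<in> B\<close>.\<close>
    have "nsmul (m * ?n) a = nsmul ((?n - 1) * m) a + nsmul m a"
      using order_mod(1)[OF B(2)]
      by (metis Suc_diff_1 add.commute mult.commute mult_Suc nsmul_add)
    then have "- x = (- b - nsmul (m * ?n) a) + nsmul ((?n - 1) * m) a"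
      using bm by (simp add: algebra_simps)
    moreover have "- b - nsmul (m * ?n) a \<in> B"
      using bm(1) order_mod(2)[OF B(2)]
      by (simp add: nsmul_mult subgroup_diff subgroup_uminus subgroup_nsmul B(1))
    ultimately show ?thesis unfolding adjoin_def by blast
  qed
  show ?thesis
    unfolding is_subgroup_def
    using add uminus adjoin_superset[OF B(1)] subgroup_zero[OF B(1)] by blast
qed

lemma torsion_mod_adjoin: "is_subgroup B \<Longrightarrow> torsion_mod B \<Longrightarrow> torsion_mod (adjoin B a)"
  using torsion_mod_mono adjoin_superset by blast

fun adjoin_list :: "'g::ab_group_add set \<Rightarrow> 'g list \<Rightarrow> 'g set" where
  "adjoin_list B [] = B"
| "adjoin_list B (g # gs) = adjoin_list (adjoin B g) gs"

lemma adjoin_list: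
  assumes "is_subgroup B" "torsion_mod B"
  shows "is_subgroup (adjoin_list B gs)" "B \<subseteq> adjoin_list B gs" "set gs \<subseteq> adjoin_list B gs"
proof -
  have "is_subgroup (adjoin_list B gs) \<and> B \<subseteq> adjoin_list B gs \<and> set gs \<subseteq> adjoin_list B gs"
    using assms
  proof (induction gs arbitrary: B)
    case (Cons g gs)
    have "is_subgroup (adjoin B g)" "torsion_mod (adjoin B g)"
      using Cons.prems is_subgroup_adjoin torsion_mod_adjoin by blast+
    then have "is_subgroup (adjoin_list (adjoin B g) gs)" "adjoin B g \<subseteq> adjoin_list (adjoin B g) gs"
      "set gs \<subseteq> adjoin_list (adjoin B g) gs"
      using Cons.IH by auto
    then show ?case
      using adjoin_superset[OF Cons.prems(1), of g] adjoin_generator[OF Cons.prems(1), of g] by auto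
  qed simp
  then show "is_subgroup (adjoin_list B gs)" "B \<subseteq> adjoin_list B gs" "set gs \<subseteq> adjoin_list B gs"
    by auto
qed

lemma adjoin_list_UNIV:
  assumes B: "is_subgroup B" "finite_index B"
  obtains gs where "adjoin_list B gs = UNIV"
proof -
  let ?C = "{(\<lambda>h. g + h) ` B | g. True}"
  define r where "r c = (SOME g. c = (\<lambda>h. g + h) ` B)" for c
  have "finite (r ` ?C)"
    using B(2) unfolding finite_index_def by (rule finite_imageI)
  then obtain gs where gs: "set gs = r ` ?C"
    using finite_list by (metis (no_types))
  have tors: "torsion_mod B" using torsion_mod_finite_index[OF B] .
  have "x \<in> adjoin_list B gs" for x
  proof -
    let ?c = "(\<lambda>h. x + h) ` B"
    have "\<exists>g. ?c = (\<lambda>h. g + h) ` B"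
      by (rule exI[of _ x]) (rule refl)
    then have "?c = (\<lambda>h. r ?c + h) ` B"
      unfolding r_def by (rule someI_ex)
    moreover have "x \<in> ?c"
      by (rule image_eqI[of _ _ 0]) (simp_all add: subgroup_zero[OF B(1)])
    ultimately obtain h where h: "h \<in> B" "x = r ?c + h"
      by auto
    have "?c \<in> ?C" by (intro CollectI exI[of _ x]) simp
    then have "r ?c \<in> adjoin_list B gs"
      using gs adjoin_list(3)[OF B(1) tors, of gs] by auto
    moreover have "h \<in> adjoin_list B gs"
      using h(1) adjoin_list(2)[OF B(1) tors] by auto
    ultimately have "r ?c + h \<in> adjoin_list B gs"
      by (rule subgroup_add[OF adjoin_list(1)[OF B(1) tors]])
    then show ?thesis
      by (rule ssubst[OF h(2)])
  qed
  then have "adjoin_list B gs = UNIV" by auto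
  then show ?thesis by (rule that)
qed

section \<open>Extending torsion characters\<close>

definition torsion_character_on :: "'g::ab_group_add set \<Rightarrow> ('g \<Rightarrow> complex) \<Rightarrow> bool" where
  "torsion_character_on B \<chi> \<longleftrightarrow>
     (\<forall>x\<in>B. \<forall>y\<in>B. \<chi> (x + y) = \<chi> x * \<chi> y) \<and> (\<exists>N>0. \<forall>x\<in>B. \<chi> x ^ N = 1)"

lemma torsion_character_on_zero:
  assumes "is_subgroup B" "torsion_character_on B \<chi>"
  shows "\<chi> 0 = 1"
proof -
  obtain N where "N > 0" "\<chi> 0 ^ N = 1"
    using assms subgroup_zero unfolding torsion_character_on_def by blast
  then have "\<chi> 0 \<noteq> 0" by (auto simp: power_0_left)
  moreover have "\<chi> 0 = \<chi> 0 * \<chi> 0"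
    using assms subgroup_zero unfolding torsion_character_on_def by (metis add_0)
  ultimately show ?thesis by (metis mult_cancel_left1)
qed

lemma torsion_character_on_nsmul:
  assumes "is_subgroup B" "torsion_character_on B \<chi>" "c \<in> B"
  shows "\<chi> (nsmul q c) = \<chi> c ^ q"
proof (induction q)
  case 0
  then show ?case using torsion_character_on_zero[OF assms(1,2)] by simp
next
  case (Suc q)
  then show ?case
    using assms subgroup_nsmul[OF assms(1,3)] unfolding torsion_character_on_def by auto
qed

lemma torsion_character_on_UNIV:
  assumes "torsion_character_on UNIV \<chi>"
  shows "torsion_character \<chi>"
proof -
  obtain N where N: "N > 0" "\<And>x. \<chi> x ^ N = 1"
    using assms unfolding torsion_character_on_def by auto
  then have "cmod (\<chi> x) = 1" for x
    using power_eq_1_iff[of "\<chi> x" N] by auto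
  then show ?thesis
    using assms N unfolding torsion_character_on_def torsion_character_def character_def by auto
qed

lemma adjoin_character_well_defined:
  assumes B: "is_subgroup B" "torsion_mod B" and \<chi>: "torsion_character_on B \<chi>"
    and z: "z ^ order_mod B a = \<chi> (nsmul (order_mod B a) a)"
    and b: "b \<in> B" "b' \<in> B" and eq: "b + nsmul m a = b' + nsmul m' a" and "m \<le> m'"
  shows "\<chi> b * z ^ m = \<chi> b' * z ^ m'"
proof -
  let ?n = "order_mod B a"
  have diff: "nsmul (m' - m) a = b - b'"
    using eq nsmul_add[of m "m' - m" a] \<open>m \<le> m'\<close> by (simp add: algebra_simps)
  then have "nsmul (m' - m) a \<in> B"
    using subgroup_diff[OF B(1) b] by simp
  then obtain q where q: "m' - m = q * ?n"
    using order_mod_dvd[OF B] by (metis dvdE mult.commute)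
  have na: "nsmul ?n a \<in> B" using order_mod(2)[OF B(2)] .
  have "b = b' + nsmul q (nsmul ?n a)"
    using diff q by (simp add: nsmul_mult[symmetric] algebra_simps)
  then have "\<chi> b = \<chi> b' * z ^ (?n * q)"
    using \<chi> b(2) subgroup_nsmul[OF B(1) na]
    by (simp add: torsion_character_on_def torsion_character_on_nsmul[OF B(1) \<chi> na] z power_mult)
  moreover have "m' = m + ?n * q"
    using q \<open>m \<le> m'\<close> by (simp add: mult.commute)
  ultimately show ?thesis
    by (simp add: power_add mult.assoc)
qed

text \<open>The extension \<open>b + m a \<mapsto> \<chi> b * z ^ m\<close>; the \<open>THE\<close> is only meaningful on \<open>adjoin B a\<close>
  and when \<open>z ^ n = \<chi> (n a)\<close> for the order \<open>n\<close> of \<open>a\<close> modulo \<open>B\<close>.\<close>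

definition adjoin_character :: "'g::ab_group_add set \<Rightarrow> 'g \<Rightarrow> ('g \<Rightarrow> complex) \<Rightarrow> complex \<Rightarrow> 'g \<Rightarrow> complex"
  where "adjoin_character B a \<chi> z x = (THE v. \<exists>b m. b \<in> B \<and> x = b + nsmul m a \<and> v = \<chi> b * z ^ m)"

lemma adjoin_character_eq:
  assumes B: "is_subgroup B" "torsion_mod B" and \<chi>: "torsion_character_on B \<chi>"
    and z: "z ^ order_mod B a = \<chi> (nsmul (order_mod B a) a)" and b: "b \<in> B"
  shows "adjoin_character B a \<chi> z (b + nsmul m a) = \<chi> b * z ^ m"
  unfolding adjoin_character_def
proof (rule the_equality)
  fix v assume "\<exists>b' m'. b' \<in> B \<and> b + nsmul m a = b' + nsmul m' a \<and> v = \<chi> b' * z ^ m'"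
  then obtain b' m' where b': "b' \<in> B" "b + nsmul m a = b' + nsmul m' a" "v = \<chi> b' * z ^ m'"
    by blast
  show "v = \<chi> b * z ^ m"
  proof (cases "m \<le> m'")
    case True
    then show ?thesis
      using adjoin_character_well_defined[OF B \<chi> z b b'(1,2)] b'(3) by simp
  next
    case False
    then show ?thesis
      using adjoin_character_well_defined[OF B \<chi> z b'(1) b b'(2)[symmetric]] b'(3) by simp
  qed
qed (use b in blast)

lemma torsion_character_on_adjoin:
  assumes B: "is_subgroup B" "torsion_mod B" and \<chi>: "torsion_character_on B \<chi>"
    and z: "z ^ order_mod B a = \<chi> (nsmul (order_mod B a) a)"
  shows "torsion_character_on (adjoin B a) (adjoin_character B a \<chi> z)"
proof -
  let ?n = "order_mod B a" and ?\<chi> = "adjoin_character B a \<chi> z"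
  note eq = adjoin_character_eq[OF B \<chi> z]
  obtain N where N: "N > 0" "\<And>x. x \<in> B \<Longrightarrow> \<chi> x ^ N = 1"
    using \<chi> unfolding torsion_character_on_def by blast
  have mult: "?\<chi> (x + y) = ?\<chi> x * ?\<chi> y" if xy: "x \<in> adjoin B a" "y \<in> adjoin B a" for x y
  proof -
    obtain b m where bm: "b \<in> B" "x = b + nsmul m a"
      using xy(1) unfolding adjoin_def by auto
    obtain b' m' where bm': "b' \<in> B" "y = b' + nsmul m' a"
      using xy(2) unfolding adjoin_def by auto
    have "x + y = (b + b') + nsmul (m + m') a"
      using bm bm' by (simp add: nsmul_add algebra_simps)
    then have "?\<chi> (x + y) = \<chi> (b + b') * z ^ (m + m')"
      using eq subgroup_add[OF B(1) bm(1) bm'(1)] by simp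
    also have "\<dots> = (\<chi> b * z ^ m) * (\<chi> b' * z ^ m')"
      using \<chi> bm bm' unfolding torsion_character_on_def by (simp add: power_add)
    finally show ?thesis using eq bm bm' by simp
  qed
  have root: "?\<chi> x ^ (N * ?n) = 1" if x: "x \<in> adjoin B a" for x
  proof -
    obtain b m where bm: "b \<in> B" "x = b + nsmul m a"
      using x unfolding adjoin_def by auto
    have "?\<chi> x ^ (N * ?n) = (\<chi> b ^ N) ^ ?n * ((z ^ ?n) ^ N) ^ m"
      using eq bm by (simp add: power_mult_distrib power_mult[symmetric] mult_ac)
    then show ?thesis
      using N bm z order_mod(2)[OF B(2)] by simp
  qed
  show ?thesis
    unfolding torsion_character_on_def using mult root N(1) order_mod(1)[OF B(2)]
    by (intro conjI ballI exI[of _ "N * ?n"]) auto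
qed

lemma adjoin_character_restrict:
  assumes "is_subgroup B" "torsion_mod B" "torsion_character_on B \<chi>"
    and "z ^ order_mod B a = \<chi> (nsmul (order_mod B a) a)" and "b \<in> B"
  shows "adjoin_character B a \<chi> z b = \<chi> b"
  using adjoin_character_eq[OF assms, of 0] by simp

lemma adjoin_character_generator:
  assumes "is_subgroup B" "torsion_mod B" "torsion_character_on B \<chi>"
    and "z ^ order_mod B a = \<chi> (nsmul (order_mod B a) a)"
  shows "adjoin_character B a \<chi> z a = z"
  using adjoin_character_eq[OF assms subgroup_zero[OF assms(1)], of 1]
    torsion_character_on_zero[OF assms(1,3)] by simp

lemma ex_nth_root_complex:
  fixes c :: complex
  assumes "n > 0"
  obtains z where "z ^ n = c"
proof (cases "c = 0")
  case True
  then show ?thesis using that[of 0] assms by simp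
next
  case False
  have "card {z::complex. z ^ n = c} = n"
    by (rule card_nth_roots[OF False assms])
  then have "{z::complex. z ^ n = c} \<noteq> {}"
    using assms by (metis card.empty less_not_refl)
  then show ?thesis using that by blast
qed

lemma torsion_character_on_extend:
  assumes "is_subgroup B" "torsion_mod B" "torsion_character_on B \<chi>"
  shows "\<exists>\<chi>'. torsion_character_on (adjoin_list B gs) \<chi>' \<and> (\<forall>b\<in>B. \<chi>' b = \<chi> b)"
  using assms
proof (induction gs arbitrary: B \<chi>)
  case Nil
  then show ?case by auto
next
  case (Cons g gs)
  obtain z where "z ^ order_mod B g = \<chi> (nsmul (order_mod B g) g)"
    by (rule ex_nth_root_complex[OF order_mod(1)[OF Cons.prems(2)]])
  then obtain \<chi>1 where \<chi>1: "torsion_character_on (adjoin B g) \<chi>1" "\<And>b. b \<in> B \<Longrightarrow> \<chi>1 b = \<chi> b"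
    using torsion_character_on_adjoin[OF Cons.prems] adjoin_character_restrict[OF Cons.prems] by blast
  have "is_subgroup (adjoin B g)" "torsion_mod (adjoin B g)"
    using Cons.prems is_subgroup_adjoin torsion_mod_adjoin by blast+
  then obtain \<chi>' where "torsion_character_on (adjoin_list (adjoin B g) gs) \<chi>'"
      "\<forall>b\<in>adjoin B g. \<chi>' b = \<chi>1 b"
    using Cons.IH[OF _ _ \<chi>1(1)] by blast
  then show ?case
    using \<chi>1(2) adjoin_superset[OF Cons.prems(1), of g] by (intro exI[of _ \<chi>']) auto
qed

lemma exists_torsion_character:
  assumes "is_subgroup B" "torsion_mod B" "adjoin_list B gs = UNIV" "torsion_character_on B \<chi>"
  obtains \<psi> where "torsion_character \<psi>" "\<And>b. b \<in> B \<Longrightarrow> \<psi> b = \<chi> b"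
  using torsion_character_on_extend[OF assms(1,2,4), of gs] assms(3) torsion_character_on_UNIV
  by auto

section \<open>Fourier expansion of periodic functions\<close>

inductive_set char_span :: "('g::ab_group_add \<Rightarrow> complex) set" where
  zero: "(\<lambda>_. 0) \<in> char_span"
| add_character: "torsion_character \<chi> \<Longrightarrow> f \<in> char_span \<Longrightarrow> (\<lambda>x. c * \<chi> x + f x) \<in> char_span"

lemma char_span_add: "f \<in> char_span \<Longrightarrow> g \<in> char_span \<Longrightarrow> (\<lambda>x. f x + g x) \<in> char_span"
proof (induction f rule: char_span.induct)
  case (add_character \<chi> f c)
  then have "(\<lambda>x. c * \<chi> x + (f x + g x)) \<in> char_span"
    by (intro char_span.add_character) auto
  then show ?case by (simp add: add.assoc)
qed simp

lemma char_span_mult_character: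
  "f \<in> char_span \<Longrightarrow> torsion_character \<psi> \<Longrightarrow> (\<lambda>x. f x * \<psi> x) \<in> char_span"
proof (induction f rule: char_span.induct)
  case zero
  then show ?case by (simp add: char_span.zero)
next
  case (add_character \<chi> f c)
  then have "(\<lambda>x. c * (\<chi> x * \<psi> x) + f x * \<psi> x) \<in> char_span"
    by (intro char_span.add_character torsion_character_mult) auto
  then show ?case by (simp add: algebra_simps)
qed

lemma char_span_sum:
  "finite A \<Longrightarrow> (\<And>a. a \<in> A \<Longrightarrow> F a \<in> char_span) \<Longrightarrow> (\<lambda>x. \<Sum>a\<in>A. F a x) \<in> char_span"
proof (induction A rule: finite_induct)
  case empty
  then show ?case by (simp add: char_span.zero)
next
  case (insert a A)
  then have "(\<lambda>x. F a x + (\<lambda>x. \<Sum>a\<in>A. F a x) x) \<in> char_span"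
    by (intro char_span_add) auto
  then show ?case using insert by simp
qed

lemma cis_power_self: "0 < n \<Longrightarrow> cis (2 * pi / n) ^ n = 1"
  by (simp add: DeMoivre)
lemma cis_power_neq_1:
  fixes m n :: nat
  assumes "0 < m" "m < n"
  shows "cis (2 * pi / n) ^ m \<noteq> 1"
proof -
  have "inj_on (\<lambda>k. cis (2 * pi * real k / real n)) {..<n}"
    using bij_betw_roots_unity[of n] assms unfolding bij_betw_def by simp
  then have "cis (2 * pi * real m / real n) \<noteq> cis (2 * pi * real 0 / real n)"
    using assms by (metis inj_on_contraD lessThan_iff order.strict_trans less_not_refl)
  then show ?thesis by (simp add: DeMoivre mult_ac)
qed
lemma sum_cnj_cis_power:
  assumes "m < n"
  shows "(\<Sum>l<n. cnj (cis (2 * pi / n)) ^ (l * m)) = (if m = 0 then of_nat n else 0)"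
proof (cases "m = 0")
  case False
  let ?q = "cnj (cis (2 * pi / n)) ^ m"
  have "?q \<noteq> 1"
    unfolding complex_cnj_power[symmetric] complex_cnj_one_iff
    using False by (intro cis_power_neq_1 assms) simp
  moreover have "?q ^ n = cnj (cis (2 * pi / n) ^ n) ^ m"
    by (simp only: complex_cnj_power power_mult[symmetric] mult.commute)
  then have "?q ^ n = 1"
    using cis_power_self[of n] assms by simp
  ultimately have "(\<Sum>l<n. ?q ^ l) = 0"
    using geometric_sum[of ?q n] by simp
  then show ?thesis
    using False by (simp only: power_mult[symmetric] mult.commute) simp
qed simp

text \<open>The component of \<open>f\<close> on which translation by \<open>g\<close> acts by \<open>\<omega>\<^sup>l\<close>,
  where \<open>\<omega>\<close> is a primitive \<open>n\<close>-th root of unity.\<close>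

definition isotypic :: "nat \<Rightarrow> 'g::ab_group_add \<Rightarrow> ('g \<Rightarrow> complex) \<Rightarrow> nat \<Rightarrow> 'g \<Rightarrow> complex" where
  "isotypic n g f l x = (\<Sum>m<n. cnj (cis (2 * pi / n)) ^ (l * m) * f (x + nsmul m g)) / of_nat n"

lemma sum_isotypic:
  assumes "0 < n"
  shows "(\<Sum>l<n. isotypic n g f l x) = f x"
proof -
  let ?\<zeta> = "cnj (cis (2 * pi / n))"
  have "(\<Sum>l<n. isotypic n g f l x) = (\<Sum>l<n. \<Sum>m<n. ?\<zeta> ^ (l * m) * f (x + nsmul m g)) / of_nat n"
    unfolding isotypic_def by (simp add: sum_divide_distrib)
  also have "\<dots> = (\<Sum>m<n. \<Sum>l<n. ?\<zeta> ^ (l * m) * f (x + nsmul m g)) / of_nat n"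
    by (subst sum.swap) (rule refl)
  also have "\<dots> = (\<Sum>m<n. (\<Sum>l<n. ?\<zeta> ^ (l * m)) * f (x + nsmul m g)) / of_nat n"
    by (simp add: sum_distrib_right)
  also have "\<dots> = (\<Sum>m<n. if m = 0 then of_nat n * f (x + nsmul m g) else 0) / of_nat n"
    by (intro arg_cong[where f = "\<lambda>s. s / of_nat n"] sum.cong) (simp_all add: sum_cnj_cis_power)
  also have "\<dots> = f x"
    using assms by (subst sum.delta) auto
  finally show ?thesis .
qed

lemma isotypic_add_generator:
  assumes n: "0 < n" and f: "\<And>y. f (y + nsmul n g) = f y"
  shows "isotypic n g f l (x + g) = cis (2 * pi / n) ^ l * isotypic n g f l x"
proof -
  let ?\<omega> = "cis (2 * pi / n)"
  define h where "h m = cnj ?\<omega> ^ (l * m) * f (x + nsmul m g)" for m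
  have "cnj ?\<omega> ^ (l * n) = cnj (?\<omega> ^ n) ^ l"
    by (simp only: complex_cnj_power power_mult[symmetric] mult.commute)
  then have "cnj ?\<omega> ^ (l * n) = 1"
    using cis_power_self[OF n] by simp
  then have hn: "h n = h 0"
    unfolding h_def using f[of x] by simp
  have shift: "cnj ?\<omega> ^ (l * m) * f (x + g + nsmul m g) = ?\<omega> ^ l * h (Suc m)" for m
  proof -
    have "?\<omega> ^ l * cnj ?\<omega> ^ (l * Suc m) = (cnj ?\<omega> * ?\<omega>) ^ l * cnj ?\<omega> ^ (l * m)"
      by (simp add: power_add power_mult_distrib algebra_simps)
    then show ?thesis
      unfolding h_def by (simp add: cis_cnj cis_mult add.assoc)
  qed
  have "(\<Sum>m<n. h (Suc m)) = (\<Sum>m<n. h m)"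
    using sum.lessThan_Suc_shift[of h n] hn by simp
  then show ?thesis
    unfolding isotypic_def shift by (simp add: sum_distrib_left[symmetric] h_def)
qed

definition periodic_fun :: "'g::ab_group_add set \<Rightarrow> ('g \<Rightarrow> complex) \<Rightarrow> bool" where
  "periodic_fun B f \<longleftrightarrow> (\<forall>x. \<forall>b\<in>B. f (x + b) = f x)"

lemma periodic_fun_isotypic:
  assumes "periodic_fun B f"
  shows "periodic_fun B (isotypic n g f l)"
proof -
  have "f (x + b + nsmul m g) = f (x + nsmul m g)" if "b \<in> B" for x b m
    using assms that unfolding periodic_fun_def by (metis add.commute add.left_commute)
  then show ?thesis
    unfolding periodic_fun_def isotypic_def by simp
qed

lemma periodic_fun_adjoin_twist:
  assumes F: "periodic_fun B F" and Fg: "\<And>x. F (x + g) = \<psi> g ^ l * F x"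
    and \<psi>: "character \<psi>" and \<psi>B: "\<And>b. b \<in> B \<Longrightarrow> \<psi> b = 1"
  shows "periodic_fun (adjoin B g) (\<lambda>x. F x * cnj (\<psi> x) ^ l)"
proof -
  define h where "h x = F x * cnj (\<psi> x) ^ l" for x
  have "h (x + g) = h x * (cnj (\<psi> g) * \<psi> g) ^ l" for x
    unfolding h_def Fg character_add[OF \<psi>] by (simp add: power_mult_distrib algebra_simps)
  then have hg: "h (x + g) = h x" for x
    using cnj_mult_self_norm_1[OF character_norm[OF \<psi>]] by simp
  have hm: "h (x + nsmul m g) = h x" for x m
    by (induction m arbitrary: x) (simp_all add: hg add.assoc[symmetric])
  have hB: "h (x + b) = h x" if "b \<in> B" for x b
    using F that \<psi>B[OF that] unfolding h_def periodic_fun_def by (simp add: character_add[OF \<psi>])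
  have "h (x + y) = h x" if "y \<in> adjoin B g" for x y
  proof -
    obtain b m where "b \<in> B" "y = b + nsmul m g"
      using \<open>y \<in> adjoin B g\<close> unfolding adjoin_def by auto
    then show ?thesis
      using hB hm by (metis add.assoc add.commute)
  qed
  then show ?thesis
    unfolding periodic_fun_def h_def by blast
qed

lemma exists_torsion_character_adjoin:
  assumes B: "is_subgroup B" "torsion_mod B" and G: "adjoin_list (adjoin B g) gs = UNIV"
  obtains \<psi> where "torsion_character \<psi>" "\<And>b. b \<in> B \<Longrightarrow> \<psi> b = 1"
    "\<psi> g = cis (2 * pi / order_mod B g)"
proof -
  let ?\<omega> = "cis (2 * pi / order_mod B g)"
  have one: "torsion_character_on B (\<lambda>_. 1)"
    unfolding torsion_character_on_def by auto
  have z: "?\<omega> ^ order_mod B g = (\<lambda>_. 1) (nsmul (order_mod B g) g)"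
    using cis_power_self[OF order_mod(1)[OF B(2)]] by simp
  obtain \<psi> where \<psi>: "torsion_character \<psi>"
    "\<And>b. b \<in> adjoin B g \<Longrightarrow> \<psi> b = adjoin_character B g (\<lambda>_. 1) ?\<omega> b"
    by (rule exists_torsion_character[OF is_subgroup_adjoin[OF B] torsion_mod_adjoin[OF B] G
          torsion_character_on_adjoin[OF B one z]]) blast
  show ?thesis
  proof (rule that[OF \<psi>(1)])
    show "\<psi> b = 1" if "b \<in> B" for b
      using \<psi>(2)[of b] subsetD[OF adjoin_superset[OF B(1)] that]
        adjoin_character_restrict[OF B one z that] by simp
    show "\<psi> g = ?\<omega>"
      using \<psi>(2)[OF adjoin_generator[OF B(1)]] adjoin_character_generator[OF B one z] by simp
  qed
qed

lemma periodic_fun_char_span_adjoin_list: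
  assumes "is_subgroup B" "torsion_mod B" "adjoin_list B gs = UNIV" "periodic_fun B f"
  shows "f \<in> char_span"
  using assms
proof (induction gs arbitrary: B f)
  case Nil
  then have "\<forall>x. \<forall>b\<in>UNIV. f (x + b) = f x"
    unfolding periodic_fun_def by simp
  then have "f (0 + x) = f 0" for x
    by blast
  then have "f = (\<lambda>x. f 0 * 1 + 0)"
    by auto
  also have "\<dots> \<in> char_span"
    by (intro char_span.add_character torsion_character_one char_span.zero)
  finally show ?case .
next
  case (Cons g gs)
  let ?B' = "adjoin B g" and ?n = "order_mod B g"
  have n: "0 < ?n" "nsmul ?n g \<in> B"
    using order_mod[OF Cons.prems(2)] by auto
  have B': "is_subgroup ?B'" "torsion_mod ?B'" "adjoin_list ?B' gs = UNIV"
    using is_subgroup_adjoin[OF Cons.prems(1,2)] torsion_mod_adjoin[OF Cons.prems(1,2)] Cons.prems(3)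
    by simp_all
  obtain \<psi> where \<psi>: "torsion_character \<psi>" "\<And>b. b \<in> B \<Longrightarrow> \<psi> b = 1" "\<psi> g = cis (2 * pi / ?n)"
    using exists_torsion_character_adjoin[OF Cons.prems(1,2) B'(3)] by blast
  define F where "F l = isotypic ?n g f l" for l
  have "periodic_fun ?B' (\<lambda>x. F l x * cnj (\<psi> x) ^ l)" for l
  proof (rule periodic_fun_adjoin_twist)
    show "periodic_fun B (F l)"
      unfolding F_def by (rule periodic_fun_isotypic[OF Cons.prems(4)])
    show "F l (x + g) = \<psi> g ^ l * F l x" for x
      unfolding F_def \<psi>(3)
      using Cons.prems(4) n by (intro isotypic_add_generator) (auto simp: periodic_fun_def)
  qed (use \<psi> torsion_character_character in auto)
  then have "(\<lambda>x. F l x * cnj (\<psi> x) ^ l * \<psi> x ^ l) \<in> char_span" for l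
    by (rule char_span_mult_character[OF Cons.IH[OF B'] torsion_character_power[OF \<psi>(1)]])
  then have "(\<lambda>x. \<Sum>l<?n. F l x * cnj (\<psi> x) ^ l * \<psi> x ^ l) \<in> char_span"
    by (intro char_span_sum) auto
  moreover have "F l x * cnj (\<psi> x) ^ l * \<psi> x ^ l = F l x" for l x
    using cnj_mult_self_norm_1[OF character_norm[OF torsion_character_character[OF \<psi>(1)]]]
    by (simp add: mult.assoc power_mult_distrib[symmetric])
  ultimately show ?case
    using sum_isotypic[OF n(1), of g f] unfolding F_def by simp
qed

lemma periodic_fun_char_span:
  assumes "is_subgroup H" "finite_index H" "periodic_fun H f"
  shows "f \<in> char_span"
proof -
  obtain gs where "adjoin_list H gs = UNIV"
    using adjoin_list_UNIV[OF assms(1,2)] .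
  then show ?thesis
    using periodic_fun_char_span_adjoin_list assms torsion_mod_finite_index by blast
qed

section \<open>Solutions of the convolution equation\<close>

definition hat_prod :: "('g \<Rightarrow> cseq) \<Rightarrow> ('g \<Rightarrow> complex) \<Rightarrow> cseq" where
  "hat_prod \<alpha> \<theta> = (\<lambda>t. \<Prod>\<tau><t. alpha_hat \<alpha> \<theta> \<tau>)"

lemma shift_hat_prod: "shift (hat_prod \<alpha> \<theta>) = (\<lambda>t. hat_prod \<alpha> \<theta> t * alpha_hat \<alpha> \<theta> t)"
  unfolding shift_def hat_prod_def by simp

lemma alpha_hat_in_base_ring:
  assumes "base_ring k" "\<alpha> \<in> Cc k"
  shows "alpha_hat \<alpha> \<theta> \<in> k"
proof -
  have k: "is_subring k" using assms(1) unfolding base_ring_def by simp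
  have "(\<lambda>\<tau>. \<Sum>g\<in>supp \<alpha>. (\<lambda>t. \<alpha> g t * (\<lambda>_. \<theta> g) t) \<tau>) \<in> k"
    using assms(2) unfolding Cc_def
    by (intro subring_sum[OF k] subring_mult[OF k] base_ring_const[OF assms(1)]) auto
  then show ?thesis unfolding alpha_hat_def by simp
qed

lemma is_solution_character:
  assumes "character \<theta>"
  shows "is_solution \<alpha> (\<lambda>x t. c * \<theta> (- x) * hat_prod \<alpha> \<theta> t)"
  unfolding is_solution_def
proof (intro allI)
  fix g t
  have "\<theta> (- (g - h)) = \<theta> (- g) * \<theta> h" for h
    using character_add[OF assms, of "- g" h] by simp
  then have "(\<Sum>h\<in>supp \<alpha>. \<alpha> h t * (c * \<theta> (- (g - h)) * hat_prod \<alpha> \<theta> t))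
      = (\<Sum>h\<in>supp \<alpha>. c * \<theta> (- g) * hat_prod \<alpha> \<theta> t * (\<alpha> h t * \<theta> h))"
    by (simp add: algebra_simps)
  also have "\<dots> = c * \<theta> (- g) * hat_prod \<alpha> \<theta> (Suc t)"
    unfolding hat_prod_def alpha_hat_def by (simp add: sum_distrib_left mult.assoc)
  finally show "c * \<theta> (- g) * hat_prod \<alpha> \<theta> (Suc t)
      = (\<Sum>h\<in>supp \<alpha>. \<alpha> h t * (c * \<theta> (- (g - h)) * hat_prod \<alpha> \<theta> t))"
    by simp
qed

lemma is_solution_add:
  "is_solution \<alpha> s1 \<Longrightarrow> is_solution \<alpha> s2 \<Longrightarrow> is_solution \<alpha> (\<lambda>x t. s1 x t + s2 x t)"
  unfolding is_solution_def by (simp add: sum.distrib distrib_left)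

lemma solution_unique:
  assumes "is_solution \<alpha> s1" "is_solution \<alpha> s2" "\<And>x. s1 x 0 = s2 x 0"
  shows "s1 = s2"
proof -
  have "\<forall>x. s1 x t = s2 x t" for t
    using assms unfolding is_solution_def by (induction t) simp_all
  then show ?thesis by auto
qed

lemma char_span_solution:
  assumes R: "is_subring R" "base_ring k" "k \<subseteq> R"
    and hat: "\<And>\<theta>. torsion_character \<theta> \<Longrightarrow> hat_prod \<alpha> \<theta> \<in> R"
  shows "f \<in> char_span \<Longrightarrow> \<exists>s. is_solution \<alpha> s \<and> (\<forall>x. s x 0 = f x) \<and> (\<forall>x. s x \<in> R)"
proof (induction f rule: char_span.induct)
  case zero
  have "is_solution \<alpha> (\<lambda>x t. 0)"
    unfolding is_solution_def by simp
  then show ?case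
    using subring_zero[OF R(1)] by (intro exI[of _ "\<lambda>x t. 0"]) auto
next
  case (add_character \<chi> f c)
  then obtain s where s: "is_solution \<alpha> s" "\<forall>x. s x 0 = f x" "\<forall>x. s x \<in> R"
    by blast
  define \<theta> where "\<theta> y = \<chi> (- y)" for y
  have \<theta>: "torsion_character \<theta>"
    unfolding \<theta>_def by (rule torsion_character_uminus[OF add_character(1)])
  define s' where "s' x t = c * \<theta> (- x) * hat_prod \<alpha> \<theta> t + s x t" for x t
  have "is_solution \<alpha> s'"
    unfolding s'_def by (rule is_solution_add[OF is_solution_character[OF torsion_character_character[OF \<theta>]] s(1)])
  moreover have "s' x 0 = c * \<chi> x + f x" for x
    unfolding s'_def \<theta>_def hat_prod_def using s(2) by simp
  moreover have "s' x \<in> R" for x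
  proof -
    have "(\<lambda>t. (\<lambda>_. c * \<theta> (- x)) t * hat_prod \<alpha> \<theta> t) \<in> R"
      by (rule subring_mult[OF R(1) base_ring_const[OF R(2,3)] hat[OF \<theta>]])
    then have "(\<lambda>t. (\<lambda>t. (\<lambda>_. c * \<theta> (- x)) t * hat_prod \<alpha> \<theta> t) t + s x t) \<in> R"
      using s(3) by (intro subring_add[OF R(1)]) auto
    then show ?thesis unfolding s'_def by simp
  qed
  ultimately show ?case by blast
qed

lemma periodic_solution_in_subring:
  assumes R: "is_subring R" "base_ring k" "k \<subseteq> R"
    and hat: "\<And>\<theta>. torsion_character \<theta> \<Longrightarrow> hat_prod \<alpha> \<theta> \<in> R"
    and s: "is_solution \<alpha> s" and H: "is_subgroup H" "finite_index H" "periodic H s"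
  shows "s g \<in> R"
proof -
  have "periodic_fun H (\<lambda>x. s x 0)"
    using H(3) unfolding periodic_def periodic_fun_def by simp
  then have "(\<lambda>x. s x 0) \<in> char_span"
    by (rule periodic_fun_char_span[OF H(1,2)])
  then obtain s' where s': "is_solution \<alpha> s'" "\<forall>x. s' x 0 = s x 0" "\<forall>x. s' x \<in> R"
    using char_span_solution[OF R hat] by blast
  have "s = s'"
    using solution_unique[OF s s'(1)] s'(2) by simp
  then show ?thesis
    using s'(3) by simp
qed

lemma hat_prod_periodic_solution:
  assumes "torsion_character \<theta>"
  obtains s H where "is_solution \<alpha> s" "is_subgroup H" "finite_index H" "periodic H s"
    "s 0 = hat_prod \<alpha> \<theta>"
proof
  have \<theta>: "character \<theta>"
    using assms by (rule torsion_character_character)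
  let ?H = "{g. \<theta> g = 1}"
  show "is_solution \<alpha> (\<lambda>x t. 1 * \<theta> (- x) * hat_prod \<alpha> \<theta> t)"
    by (rule is_solution_character[OF \<theta>])
  show "is_subgroup ?H"
    by (rule is_subgroup_character_kernel[OF \<theta>])
  show "finite_index ?H"
    by (rule finite_index_character_kernel[OF assms])
  have "\<theta> (- (g + h)) = \<theta> (- g)" if "\<theta> h = 1" for g h
    using character_add[OF \<theta>, of "- g" "- h"] character_uminus[OF \<theta>, of h] that
    by (simp add: add.commute)
  then show "periodic ?H (\<lambda>x t. 1 * \<theta> (- x) * hat_prod \<alpha> \<theta> t)"
    unfolding periodic_def by simp
  show "(\<lambda>t. 1 * \<theta> (- 0) * hat_prod \<alpha> \<theta> t) = hat_prod \<alpha> \<theta>"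
    using character_zero[OF \<theta>] by simp
qed

theorem theorem2p9:
  fixes k :: "cseq set" and \<alpha> :: "'g::ab_group_add \<Rightarrow> cseq"
  assumes "base_ring k"
    and "\<alpha> \<in> Cc k"
  shows "L_per k \<alpha> = ring_gen (k \<union>
           {(\<lambda>t. \<Prod>\<tau><t. alpha_hat \<alpha> \<theta> \<tau>) | \<theta>. torsion_character \<theta>})"
proof -
  let ?R = "ring_gen (k \<union> {hat_prod \<alpha> \<theta> | \<theta>. torsion_character \<theta>})"
  have R: "is_subring ?R" "k \<subseteq> ?R" "\<And>\<theta>. torsion_character \<theta> \<Longrightarrow> hat_prod \<alpha> \<theta> \<in> ?R"
    by (auto intro: is_subring_ring_gen subsetD[OF ring_gen_superset])
  have "shift x \<in> ?R" if "x \<in> k" for x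
    using that assms(1) R(2) unfolding base_ring_def sigma_stable_def by blast
  moreover have "shift (hat_prod \<alpha> \<theta>) \<in> ?R" if "torsion_character \<theta>" for \<theta>
    unfolding shift_hat_prod using alpha_hat_in_base_ring[OF assms] R(2)
    by (intro subring_mult[OF R(1) R(3)[OF that]]) blast
  ultimately have "sigma_stable ?R"
    by (intro sigma_stable_ring_gen) blast
  then have L_R: "L_per k \<alpha> \<subseteq> ?R"
    unfolding L_per_def using R(2)
    by (intro sigma_ring_gen_least[OF R(1)])
      (auto intro: periodic_solution_in_subring[OF R(1) assms(1) R(2) R(3)])
  have L: "is_subring (L_per k \<alpha>)" "k \<subseteq> L_per k \<alpha>"
    unfolding L_per_def using is_subring_sigma_ring_gen sigma_ring_gen_superset by blast+
  have "hat_prod \<alpha> \<theta> \<in> L_per k \<alpha>" if \<theta>: "torsion_character \<theta>" for \<theta>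
  proof -
    obtain s H where "is_solution \<alpha> s" "is_subgroup H" "finite_index H" "periodic H s"
      and "s 0 = hat_prod \<alpha> \<theta>"
      by (rule hat_prod_periodic_solution[OF \<theta>])
    then have "hat_prod \<alpha> \<theta> \<in>
        {s g | s g. is_solution \<alpha> s \<and> (\<exists>H. is_subgroup H \<and> finite_index H \<and> periodic H s)}"
      by (intro CollectI exI[of _ s] exI[of _ 0]) auto
    then show ?thesis
      unfolding L_per_def by (intro subsetD[OF sigma_ring_gen_superset] UnI2)
  qed
  then have R_L: "?R \<subseteq> L_per k \<alpha>"
    using L(2) by (intro ring_gen_least[OF L(1)]) blast
  have "{(\<lambda>t. \<Prod>\<tau><t. alpha_hat \<alpha> \<theta> \<tau>) | \<theta>. torsion_character \<theta>}
      = {hat_prod \<alpha> \<theta> | \<theta>. torsion_character \<theta>}"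
    unfolding hat_prod_def ..
  with L_R R_L show ?thesis
    by simp
qed

end
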